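(* Let $(R,\mathfrak m)$ be a Noetherian local ring, let $I\subseteq R$ be an ideal and let $J=(f_1,\ldots,f_t)\subseteq I$ with $\nu_I(f_i)=1$ for $i=1,\ldots,t$. Consider the complex of graded $\mathrm{gr}_I(R)$-modules $$0\to \mathrm{gr}(\mathcal Z)\xrightarrow{\mathrm{gr}(i)}\mathrm{gr}(R^t)\xrightarrow{\mathrm{gr}(\mathfrak f)}\mathrm{gr}_I(R)\xrightarrow{\mathrm{gr}(\pi)}\mathrm{gr}_{I/J}(R/J)\to 0 \qquad ( * )$$ described in the context. The following are equivalent: (a) the natural surjection $\mathcal A_{R/J}(I/J)\to \mathcal R_{R/J}(I/J)$ is an isomorphism, i.e. $J\cap I^n=JI^{n-1}$ for all $n\ge 1$; (b) the complex $( * )$ is exact; (c) there exists a homogeneous system of generators of $\mathrm{Syz}(f_1^*,\ldots,f_t^* )$ each of whose elements is of the form $(\varphi\circ\psi)(a)$ for some $a\in\mathcal Z$.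
   Context: For $f\in R$, $\nu_I(f)$ is the largest $n$ with $f\in I^n$ ($\infty$ if none), and $f^*$ is the class of $f$ in $I^{\nu_I(f)}/I^{\nu_I(f)+1}\subseteq \mathrm{gr}_I(R)=\bigoplus_{n\ge0}I^n/I^{n+1}$ (with $f^*=0$ if $\nu_I(f)=\infty$). The Aluffi algebra is $\mathcal A_{R/J}(I/J)=\bigoplus_{n\ge0}I^n/JI^{n-1}$ (with $I^0=R$, $JI^{-1}:=J$ in degree 0), the Rees algebra is $\mathcal R_{R/J}(I/J)=\bigoplus_{n\ge0}I^n/(J\cap I^n)$, and the natural surjection is induced by identity on $I^n$. Let $\mathfrak f:R^t\to R$, $(a_1,\ldots,a_t)\mapsto\sum a_if_i$, let $\mathcal Z=\ker\mathfrak f$ (first syzygy module of $f_1,\dots,f_t$), $i:\mathcal Z\hookrightarrow R^t$ the inclusion and $\pi:R\to R/J$ the projection. Filter $R$ by $I^n$, $R^t$ by $F_nR^t=(I^{n-1})^{\oplus t}$ (with $I^{m}=R$ for $m\le 0$), $\mathcal Z$ by $F_n\mathcal Z=\mathcal Z\cap F_nR^t$, and $R/J$ by $(I/J)^n$. The associated graded modules are $\mathrm{gr}(M)=\bigoplus_n F_nM/F_{n+1}M$; $\mathrm{gr}(R^t)\cong\mathrm{gr}_I(R)(-1)^t$, $\mathrm{gr}(\mathfrak f)$ sends the $i$-th basis vector $e_i$ to $f_i^*$, $\mathrm{gr}(i)$ is induced by inclusion and $\mathrm{gr}(\pi)$ is the natural surjection. $\mathrm{Syz}(f_1^*,\dots,f_t^*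 )=\ker \mathrm{gr}(\mathfrak f)$. For $0\neq a=(a_1,\ldots,a_t)\in\mathcal Z$ with $m-1=\min_j\nu_I(a_j)$, $\psi(a)$ is the class of $a$ in $F_m\mathcal Z/F_{m+1}\mathcal Z$, and $\varphi:\mathrm{gr}(\mathcal Z)\hookrightarrow \mathrm{Syz}(f_1^*,\ldots,f_t^* )$ is the canonical embedding, so that $(\varphi\circ\psi)(a)=(\overline{a_1},\ldots,\overline{a_t})$ with $\overline{a_i}$ the class of $a_i$ in $I^{m-1}/I^m$. *)

theory Defs
  imports Main "HOL-Library.Extended_Nat"
begin

definition is_ideal :: "'a::comm_ring_1 set \<Rightarrow> bool" where
  "is_ideal I \<longleftrightarrow> 0 \<in> I \<and> (\<forall>x\<in>I. \<forall>y\<in>I. x + y \<in> I) \<and> (\<forall>r x. x \<in> I \<longrightarrow> r * x \<in> I)"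

definition ideal_gen :: "'a::comm_ring_1 set \<Rightarrow> 'a set" where
  "ideal_gen S = \<Inter>{K. is_ideal K \<and> S \<subseteq> K}"

definition ideal_mult :: "'a::comm_ring_1 set \<Rightarrow> 'a set \<Rightarrow> 'a set" where
  "ideal_mult I K = ideal_gen {x * y | x y. x \<in> I \<and> y \<in> K}"

fun ideal_pow :: "'a::comm_ring_1 set \<Rightarrow> nat \<Rightarrow> 'a set" where
  "ideal_pow I 0 = UNIV"
| "ideal_pow I (Suc n) = ideal_mult I (ideal_pow I n)"

definition set_plus_ideal :: "'a::comm_ring_1 set \<Rightarrow> 'a set \<Rightarrow> 'a set" where
  "set_plus_ideal A B = {x + y | x y. x \<in> A \<and> y \<in> B}"

definition noetherian_ring :: "'a::comm_ring_1 itself \<Rightarrow> bool" where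
  "noetherian_ring _ \<longleftrightarrow> (\<forall>K::'a set. is_ideal K \<longrightarrow> (\<exists>F. finite F \<and> K = ideal_gen F))"

definition maximal_ideal :: "'a::comm_ring_1 set \<Rightarrow> bool" where
  "maximal_ideal M \<longleftrightarrow> is_ideal M \<and> M \<noteq> UNIV \<and>
     (\<forall>K. is_ideal K \<longrightarrow> M \<subseteq> K \<longrightarrow> K = M \<or> K = UNIV)"

definition local_ring :: "'a::comm_ring_1 itself \<Rightarrow> bool" where
  "local_ring _ \<longleftrightarrow> (\<exists>!M::'a set. maximal_ideal M)"

definition nu :: "'a::comm_ring_1 set \<Rightarrow> 'a \<Rightarrow> enat" where
  "nu I x = (if \<forall>n. x \<in> ideal_pow I n then \<infinity> else enat (GREATEST n. x \<in> ideal_pow I n))"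

definition Rt :: "nat \<Rightarrow> (nat \<Rightarrow> 'a::comm_ring_1) set" where
  "Rt t = {a. \<forall>i\<ge>t. a i = 0}"

text \<open>F_n R^t = (I^(n-1))^t, with I^m = R for m <= 0 (nat subtraction truncates).\<close>
definition Fvec :: "'a::comm_ring_1 set \<Rightarrow> nat \<Rightarrow> nat \<Rightarrow> (nat \<Rightarrow> 'a) set" where
  "Fvec I t n = {a \<in> Rt t. \<forall>i<t. a i \<in> ideal_pow I (n - 1)}"

definition fmap :: "(nat \<Rightarrow> 'a::comm_ring_1) \<Rightarrow> nat \<Rightarrow> (nat \<Rightarrow> 'a) \<Rightarrow> 'a" where
  "fmap f t a = (\<Sum>i<t. a i * f i)"

definition Zmod :: "(nat \<Rightarrow> 'a::comm_ring_1) \<Rightarrow> nat \<Rightarrow> (nat \<Rightarrow> 'a) set" where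
  "Zmod f t = {a \<in> Rt t. fmap f t a = 0}"

definition FZ :: "'a::comm_ring_1 set \<Rightarrow> (nat \<Rightarrow> 'a) \<Rightarrow> nat \<Rightarrow> nat \<Rightarrow> (nat \<Rightarrow> 'a) set" where
  "FZ I f t n = Zmod f t \<inter> Fvec I t n"

text \<open>Degree n of gr(Z) -> gr(R^t) is injective:
  F_n Z / F_(n+1) Z -> F_n R^t / F_(n+1) R^t.\<close>
definition gr_i_injective :: "'a::comm_ring_1 set \<Rightarrow> (nat \<Rightarrow> 'a) \<Rightarrow> nat \<Rightarrow> bool" where
  "gr_i_injective I f t \<longleftrightarrow>
     (\<forall>n. \<forall>z\<in>FZ I f t n. z \<in> Fvec I t (n + 1) \<longrightarrow> z \<in> FZ I f t (n + 1))"

text \<open>Exactness at gr(R^t) in every degree n: a class [a] (a in F_n R^t) lies in the kernel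
  of gr(frak f), i.e. sum a_i f_i in I^(n+1), iff it lies in the image of gr(i), i.e.
  a is congruent modulo F_(n+1) R^t to an element of F_n Z.\<close>
definition gr_exact_at_Rt :: "'a::comm_ring_1 set \<Rightarrow> (nat \<Rightarrow> 'a) \<Rightarrow> nat \<Rightarrow> bool" where
  "gr_exact_at_Rt I f t \<longleftrightarrow>
     (\<forall>n. \<forall>a\<in>Fvec I t n.
        fmap f t a \<in> ideal_pow I (n + 1) \<longleftrightarrow> (\<exists>z\<in>FZ I f t n. (a - z) \<in> Fvec I t (n + 1)))"

text \<open>Exactness at gr_I(R) in every degree n: for x in I^n, the class of x is killed by
  gr(pi) (i.e. pi(x) in (I/J)^(n+1), i.e. x in I^(n+1) + J) iff it is in the image of
  gr(frak f) (i.e. x is congruent mod I^(n+1) to frak f(a) with a in F_n R^t).\<close>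
definition gr_exact_at_R :: "'a::comm_ring_1 set \<Rightarrow> (nat \<Rightarrow> 'a) \<Rightarrow> nat \<Rightarrow> bool" where
  "gr_exact_at_R I f t \<longleftrightarrow>
     (\<forall>n. \<forall>x\<in>ideal_pow I n.
        x \<in> set_plus_ideal (ideal_pow I (n + 1)) (ideal_gen (f ` {..<t})) \<longleftrightarrow>
        (\<exists>a\<in>Fvec I t n. x - fmap f t a \<in> ideal_pow I (n + 1)))"

text \<open>gr(pi) is surjective in every degree n: (I/J)^n = pi(I^n), every element of it is
  congruent modulo (I/J)^(n+1) to the image of an element of I^n.\<close>
definition gr_pi_surjective :: "'a::comm_ring_1 set \<Rightarrow> (nat \<Rightarrow> 'a) \<Rightarrow> nat \<Rightarrow> bool" where
  "gr_pi_surjective I f t \<longleftrightarrow>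
     (\<forall>n. \<forall>y\<in>set_plus_ideal (ideal_pow I n) (ideal_gen (f ` {..<t})).
        \<exists>x\<in>ideal_pow I n. y - x \<in> set_plus_ideal (ideal_pow I (n + 1)) (ideal_gen (f ` {..<t})))"

definition gr_complex_exact :: "'a::comm_ring_1 set \<Rightarrow> (nat \<Rightarrow> 'a) \<Rightarrow> nat \<Rightarrow> bool" where
  "gr_complex_exact I f t \<longleftrightarrow>
     gr_i_injective I f t \<and> gr_exact_at_Rt I f t \<and> gr_exact_at_R I f t \<and> gr_pi_surjective I f t"

text \<open>For 0 \<noteq> a in Z, psi_deg a = m where m - 1 = min_j nu_I(a_j); (phi o psi)(a) is the class
  of a in F_m R^t / F_(m+1) R^t.\<close>
definition psi_deg :: "'a::comm_ring_1 set \<Rightarrow> nat \<Rightarrow> (nat \<Rightarrow> 'a) \<Rightarrow> nat \<Rightarrow> bool" where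
  "psi_deg I t a m \<longleftrightarrow> 1 \<le> m \<and> enat (m - 1) = Min ((\<lambda>j. nu I (a j)) ` {..<t})"

text \<open>A set G of nonzero syzygies a whose images (phi o psi)(a) generate the graded
  gr_I(R)-module Syz(f^*): every homogeneous element of Syz of degree n (class of b in
  F_n R^t / F_(n+1) R^t with sum b_i f_i in I^(n+1)) is a finite sum of products of
  homogeneous elements r_a in I^(n - m_a)/I^(n - m_a + 1) with the generators
  (phi o psi)(a) of degree m_a \<le> n.\<close>
definition syz_generated_by_psi :: "'a::comm_ring_1 set \<Rightarrow> (nat \<Rightarrow> 'a) \<Rightarrow> nat \<Rightarrow> (nat \<Rightarrow> 'a) set \<Rightarrow> (( nat \<Rightarrow> 'a) \<Rightarrow> nat) \<Rightarrow> bool" where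
  "syz_generated_by_psi I f t G deg \<longleftrightarrow>
     (\<forall>n. \<forall>b\<in>Fvec I t n. fmap f t b \<in> ideal_pow I (n + 1) \<longrightarrow>
        (\<exists>S r. finite S \<and> S \<subseteq> G \<and>
           (\<forall>a\<in>S. deg a \<le> n \<and> r a \<in> ideal_pow I (n - deg a)) \<and>
           (\<lambda>i. b i - (\<Sum>a\<in>S. r a * a i)) \<in> Fvec I t (n + 1)))"

definition exists_psi_generators :: "'a::comm_ring_1 set \<Rightarrow> (nat \<Rightarrow> 'a) \<Rightarrow> nat \<Rightarrow> bool" where
  "exists_psi_generators I f t \<longleftrightarrow>
     (\<exists>G deg. G \<subseteq> Zmod f t \<and> (\<forall>a\<in>G. a \<noteq> (\<lambda>_. 0)) \<and> (\<forall>a\<in>G. psi_deg I t a (deg a)) \<and>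
        syz_generated_by_psi I f t G deg)"

end

theory Submission
  imports Defs
begin

text \<open>
  The elements of \<open>J I\<^sup>n\<^sup>-\<^sup>1\<close> are the combinations \<open>\<Sum> c\<^sub>i f\<^sub>i\<close> with
  all \<open>c\<^sub>i \<in> I\<^sup>n\<^sup>-\<^sup>1\<close>. Exactness at \<open>gr(R\<^sup>t)\<close> says that a coefficient vector whose combination
  lies one \<open>I\<close>-adic step deeper than its coefficients can be pushed one step deeper by
  subtracting a syzygy. Iterating this, every \<open>x \<in> J \<inter> I\<^sup>n\<close> gets coefficients in \<open>I\<^sup>n\<^sup>-\<^sup>1\<close>,
  which is (a); conversely (a) produces the required syzygy in one step. The remaining
  spots of the complex are harmless: \<open>gr(i)\<close> is injective and \<open>gr(\<pi>)\<close> surjective for the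
  induced filtrations, and exactness at \<open>gr\<^sub>I(R)\<close> follows from (a). For (c), each syzygy
  produced by exactness is itself a generator \<open>(\<phi>\<circ>\<psi>)(z)\<close>, and conversely a combination
  of such generators is a syzygy of the required order.
\<close>

lemma is_ideal_zero: "is_ideal K \<Longrightarrow> 0 \<in> K"
  and is_ideal_add: "is_ideal K \<Longrightarrow> x \<in> K \<Longrightarrow> y \<in> K \<Longrightarrow> x + y \<in> K"
  and is_ideal_mult: "is_ideal K \<Longrightarrow> x \<in> K \<Longrightarrow> r * x \<in> K"
  unfolding is_ideal_def by auto

lemma is_ideal_diff: "is_ideal K \<Longrightarrow> x \<in> K \<Longrightarrow> y \<in> K \<Longrightarrow> x - y \<in> K"
  using is_ideal_add[of K x "(-1) * y"] is_ideal_mult[of K y "-1"] by simp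

lemma is_ideal_sum: "is_ideal K \<Longrightarrow> (\<And>a. a \<in> S \<Longrightarrow> g a \<in> K) \<Longrightarrow> sum g S \<in> K"
  by (induct S rule: infinite_finite_induct) (auto simp: is_ideal_zero is_ideal_add)

lemma is_ideal_UNIV: "is_ideal UNIV"
  unfolding is_ideal_def by simp

lemma is_ideal_ideal_gen: "is_ideal (ideal_gen S)"
  unfolding ideal_gen_def is_ideal_def by auto

lemma ideal_gen_subset: "S \<subseteq> ideal_gen S"
  unfolding ideal_gen_def by auto

lemma ideal_gen_least: "is_ideal K \<Longrightarrow> S \<subseteq> K \<Longrightarrow> ideal_gen S \<subseteq> K"
  unfolding ideal_gen_def by auto

lemma is_ideal_ideal_mult: "is_ideal (ideal_mult I K)"
  unfolding ideal_mult_def by (rule is_ideal_ideal_gen)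

lemma ideal_mult_mem: "x \<in> I \<Longrightarrow> y \<in> K \<Longrightarrow> x * y \<in> ideal_mult I K"
  unfolding ideal_mult_def by (rule subsetD[OF ideal_gen_subset]) blast

lemma ideal_mult_least:
  "is_ideal L \<Longrightarrow> (\<And>x y. x \<in> I \<Longrightarrow> y \<in> K \<Longrightarrow> x * y \<in> L) \<Longrightarrow> ideal_mult I K \<subseteq> L"
  unfolding ideal_mult_def by (rule ideal_gen_least) auto

lemma ideal_mult_mono: "I \<subseteq> I' \<Longrightarrow> K \<subseteq> K' \<Longrightarrow> ideal_mult I K \<subseteq> ideal_mult I' K'"
  by (rule ideal_mult_least[OF is_ideal_ideal_mult]) (auto intro: ideal_mult_mem)

text \<open>The elements \<open>x\<close> with \<open>x L \<subseteq> P\<close> form an ideal, so it suffices to test generators.\<close>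
lemma ideal_mult_times_mem:
  assumes P: "is_ideal P" and gen: "\<And>u v y. u \<in> I \<Longrightarrow> v \<in> K \<Longrightarrow> y \<in> L \<Longrightarrow> u * v * y \<in> P"
    and x: "x \<in> ideal_mult I K" and y: "y \<in> L"
  shows "x * y \<in> P"
proof -
  let ?Q = "{x. \<forall>y\<in>L. x * y \<in> P}"
  have "is_ideal ?Q"
    unfolding is_ideal_def
    by (auto simp: distrib_right mult.assoc is_ideal_zero[OF P] intro: is_ideal_add[OF P] is_ideal_mult[OF P])
  then have "ideal_mult I K \<subseteq> ?Q"
    by (rule ideal_mult_least) (use gen in blast)
  then show ?thesis using x y by blast
qed

lemma is_ideal_ideal_pow: "is_ideal (ideal_pow I n)"
  by (cases n) (simp_all add: is_ideal_UNIV is_ideal_ideal_mult)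

lemma ideal_pow_Suc_subset: "ideal_pow I (Suc n) \<subseteq> ideal_pow I n"
  by (induct n) (simp_all add: ideal_mult_mono)

lemma ideal_pow_antimono: "m \<le> n \<Longrightarrow> ideal_pow I n \<subseteq> ideal_pow I m"
  by (induct n rule: dec_induct) (use ideal_pow_Suc_subset in auto)

lemma ideal_pow_mult: "x \<in> ideal_pow I p \<Longrightarrow> y \<in> ideal_pow I q \<Longrightarrow> x * y \<in> ideal_pow I (p + q)"
proof (induct p arbitrary: x y)
  case 0
  then show ?case by (simp add: is_ideal_mult is_ideal_ideal_pow)
next
  case (Suc p)
  have "u * v * y \<in> ideal_pow I (Suc p + q)"
    if "u \<in> I" "v \<in> ideal_pow I p" "y \<in> ideal_pow I q" for u v y
    using ideal_mult_mem[OF that(1) Suc.hyps[OF that(2,3)]] by (simp add: mult.assoc)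
  moreover have "x \<in> ideal_mult I (ideal_pow I p)"
    using Suc.prems(1) by simp
  ultimately show ?case
    using Suc.prems(2) by (rule ideal_mult_times_mem[OF is_ideal_ideal_pow])
qed

declare ideal_pow.simps(2)[simp del]

lemma ideal_pow_Suc: "ideal_pow I (Suc n) = ideal_mult I (ideal_pow I n)"
  by (fact ideal_pow.simps(2))

lemma enat_le_nu_iff: "enat k \<le> nu I x \<longleftrightarrow> x \<in> ideal_pow I k"
proof (cases "\<forall>n. x \<in> ideal_pow I n")
  case False
  then obtain N where N: "x \<notin> ideal_pow I N" by blast
  have bound: "n \<le> N" if "x \<in> ideal_pow I n" for n
    using N that ideal_pow_antimono[of N n I] by (cases "n \<le> N") auto
  let ?g = "GREATEST n. x \<in> ideal_pow I n"
  have "x \<in> ideal_pow I ?g"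
    by (rule GreatestI_nat[of _ 0]) (auto intro: bound)
  moreover have "x \<in> ideal_pow I k \<Longrightarrow> k \<le> ?g"
    by (rule Greatest_le_nat) (auto intro: bound)
  ultimately show ?thesis
    using False ideal_pow_antimono[of k ?g I] by (auto simp: nu_def)
qed (simp add: nu_def)

lemma nu_eq_enat: "x \<in> ideal_pow I k \<Longrightarrow> x \<notin> ideal_pow I (Suc k) \<Longrightarrow> nu I x = enat k"
  using enat_le_nu_iff[of k I x] enat_le_nu_iff[of "Suc k" I x]
  by (cases "nu I x") auto

lemma fmap_diff: "fmap f t (a - b) = fmap f t a - fmap f t b"
  unfolding fmap_def by (simp add: sum_subtractf left_diff_distrib)

lemma fmap_mem_ideal_pow:
  assumes "f ` {..<t} \<subseteq> I" and "\<And>i. i < t \<Longrightarrow> c i \<in> ideal_pow I n"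
  shows "fmap f t c \<in> ideal_pow I (Suc n)"
  unfolding fmap_def
proof (rule is_ideal_sum[OF is_ideal_ideal_pow])
  fix i assume i: "i \<in> {..<t}"
  have "f i * c i \<in> ideal_pow I (Suc n)"
    unfolding ideal_pow_Suc using assms i by (intro ideal_mult_mem) auto
  then show "c i * f i \<in> ideal_pow I (Suc n)"
    by (simp only: mult.commute)
qed

lemma is_ideal_fmap_image:
  assumes K: "is_ideal K"
  shows "is_ideal (fmap f t ` {c \<in> Rt t. \<forall>i<t. c i \<in> K})"
  unfolding is_ideal_def
proof (intro conjI allI ballI impI)
  show "0 \<in> fmap f t ` {c \<in> Rt t. \<forall>i<t. c i \<in> K}"
    by (rule image_eqI[of _ _ "\<lambda>_. 0"]) (auto simp: fmap_def Rt_def is_ideal_zero[OF K])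
next
  fix x y assume "x \<in> fmap f t ` {c \<in> Rt t. \<forall>i<t. c i \<in> K}" "y \<in> fmap f t ` {c \<in> Rt t. \<forall>i<t. c i \<in> K}"
  then obtain c d where "c \<in> Rt t" "d \<in> Rt t" "\<forall>i<t. c i \<in> K" "\<forall>i<t. d i \<in> K"
    and "x = fmap f t c" "y = fmap f t d" by auto
  then show "x + y \<in> fmap f t ` {c \<in> Rt t. \<forall>i<t. c i \<in> K}"
    by (intro image_eqI[of _ _ "\<lambda>i. c i + d i"])
      (auto simp: fmap_def Rt_def distrib_right sum.distrib is_ideal_add[OF K])
next
  fix r x assume "x \<in> fmap f t ` {c \<in> Rt t. \<forall>i<t. c i \<in> K}"
  then obtain c where "c \<in> Rt t" "\<forall>i<t. c i \<in> K" "x = fmap f t c" by auto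
  then show "r * x \<in> fmap f t ` {c \<in> Rt t. \<forall>i<t. c i \<in> K}"
    by (intro image_eqI[of _ _ "\<lambda>i. r * c i"])
      (auto simp: fmap_def Rt_def sum_distrib_left mult.assoc is_ideal_mult[OF K])
qed

lemma fmap_mem_ideal_gen: "fmap f t c \<in> ideal_gen (f ` {..<t})"
  unfolding fmap_def
proof (rule is_ideal_sum[OF is_ideal_ideal_gen])
  fix i assume "i \<in> {..<t}"
  then have "f i \<in> ideal_gen (f ` {..<t})"
    by (intro subsetD[OF ideal_gen_subset] imageI)
  then show "c i * f i \<in> ideal_gen (f ` {..<t})"
    by (rule is_ideal_mult[OF is_ideal_ideal_gen])
qed

lemma ideal_gen_eq_fmap_image: "ideal_gen (f ` {..<t}) = fmap f t ` Rt t"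
proof
  have "f j \<in> fmap f t ` Rt t" if "j < t" for j
  proof (rule image_eqI)
    have "fmap f t (\<lambda>i. if i = j then 1 else 0) = (\<Sum>i<t. if i = j then f i else 0)"
      unfolding fmap_def by (rule sum.cong) auto
    then show "f j = fmap f t (\<lambda>i. if i = j then 1 else 0)"
      using that by simp
  qed (use that in \<open>auto simp: Rt_def\<close>)
  moreover have "is_ideal (fmap f t ` Rt t)"
    using is_ideal_fmap_image[OF is_ideal_UNIV, of f t] by simp
  ultimately show "ideal_gen (f ` {..<t}) \<subseteq> fmap f t ` Rt t"
    by (intro ideal_gen_least) auto
qed (use fmap_mem_ideal_gen[of f t] in blast)

lemma ideal_mult_gen_eq_fmap_image:
  assumes K: "is_ideal K"
  shows "ideal_mult (ideal_gen (f ` {..<t})) K = fmap f t ` {c \<in> Rt t. \<forall>i<t. c i \<in> K}"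
proof
  show "ideal_mult (ideal_gen (f ` {..<t})) K \<subseteq> fmap f t ` {c \<in> Rt t. \<forall>i<t. c i \<in> K}"
  proof (rule ideal_mult_least[OF is_ideal_fmap_image[OF K]])
    fix u y assume u: "u \<in> ideal_gen (f ` {..<t})" and y: "y \<in> K"
    from u obtain c where c: "c \<in> Rt t" "u = fmap f t c"
      unfolding ideal_gen_eq_fmap_image by blast
    have "u * y = fmap f t (\<lambda>i. c i * y)"
      unfolding c(2) fmap_def by (simp add: sum_distrib_left mult_ac)
    moreover have "c i * y \<in> K" for i
      using y by (rule is_ideal_mult[OF K])
    ultimately show "u * y \<in> fmap f t ` {c \<in> Rt t. \<forall>i<t. c i \<in> K}"
      using c(1) by (auto simp: Rt_def)
  qed
next
  show "fmap f t ` {c \<in> Rt t. \<forall>i<t. c i \<in> K} \<subseteq> ideal_mult (ideal_gen (f ` {..<t})) K"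
  proof
    fix x assume "x \<in> fmap f t ` {c \<in> Rt t. \<forall>i<t. c i \<in> K}"
    then obtain c where c: "\<forall>i<t. c i \<in> K" "x = fmap f t c" by blast
    show "x \<in> ideal_mult (ideal_gen (f ` {..<t})) K"
      unfolding c(2) fmap_def
    proof (rule is_ideal_sum[OF is_ideal_ideal_mult])
      fix i assume i: "i \<in> {..<t}"
      have "f i * c i \<in> ideal_mult (ideal_gen (f ` {..<t})) K"
        using c(1) i by (intro ideal_mult_mem subsetD[OF ideal_gen_subset] imageI) auto
      then show "c i * f i \<in> ideal_mult (ideal_gen (f ` {..<t})) K"
        by (simp only: mult.commute)
    qed
  qed
qed

lemma ideal_mult_gen_pow_eq_fmap_Fvec:
  "ideal_mult (ideal_gen (f ` {..<t})) (ideal_pow I n) = fmap f t ` Fvec I t (Suc n)"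
  unfolding Fvec_def by (simp add: ideal_mult_gen_eq_fmap_image is_ideal_ideal_pow)

lemma ideal_gen_eq_fmap_Fvec_0: "ideal_gen (f ` {..<t}) = fmap f t ` Fvec I t 0"
  by (simp add: Fvec_def ideal_gen_eq_fmap_image)

lemma Fvec_Suc_subset: "Fvec I t (Suc n) \<subseteq> Fvec I t n"
  unfolding Fvec_def using ideal_pow_antimono[of "n - 1" n I] by auto

lemma Fvec_add: "a \<in> Fvec I t n \<Longrightarrow> b \<in> Fvec I t n \<Longrightarrow> (\<lambda>i. a i + b i) \<in> Fvec I t n"
  and Fvec_diff: "a \<in> Fvec I t n \<Longrightarrow> b \<in> Fvec I t n \<Longrightarrow> a - b \<in> Fvec I t n"
  unfolding Fvec_def Rt_def
  by (auto intro: is_ideal_add[OF is_ideal_ideal_pow] is_ideal_diff[OF is_ideal_ideal_pow])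

lemma fmap_mem_of_syzygy_congruence:
  assumes "f ` {..<t} \<subseteq> I" and "z \<in> FZ I f t n" and "a - z \<in> Fvec I t (Suc n)"
  shows "fmap f t a \<in> ideal_pow I (Suc n)"
proof -
  have "fmap f t a = fmap f t (a - z)"
    using assms(2) by (simp add: fmap_diff FZ_def Zmod_def)
  also have "\<dots> \<in> ideal_pow I (Suc n)"
    using assms(3) by (intro fmap_mem_ideal_pow[OF assms(1)]) (auto simp: Fvec_def)
  finally show ?thesis .
qed

lemma gr_i_injective: "gr_i_injective I f t"
  unfolding gr_i_injective_def FZ_def by auto

lemma gr_pi_surjective: "gr_pi_surjective I f t"
  unfolding gr_pi_surjective_def set_plus_ideal_def
  by (force intro: is_ideal_zero[OF is_ideal_ideal_pow])

lemma gr_exact_at_RtI: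
  assumes JI: "f ` {..<t} \<subseteq> I"
    and lift: "\<And>n a. a \<in> Fvec I t n \<Longrightarrow> fmap f t a \<in> ideal_pow I (Suc n) \<Longrightarrow>
                 \<exists>z\<in>FZ I f t n. a - z \<in> Fvec I t (Suc n)"
  shows "gr_exact_at_Rt I f t"
  unfolding gr_exact_at_Rt_def
proof (intro allI ballI iffI)
  fix n a assume "a \<in> Fvec I t n" "fmap f t a \<in> ideal_pow I (n + 1)"
  then show "\<exists>z\<in>FZ I f t n. a - z \<in> Fvec I t (n + 1)"
    using lift by simp
next
  fix n a assume "\<exists>z\<in>FZ I f t n. a - z \<in> Fvec I t (n + 1)"
  then show "fmap f t a \<in> ideal_pow I (n + 1)"
    using fmap_mem_of_syzygy_congruence[OF JI] by fastforce
qed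

lemma gr_exact_at_RtE:
  assumes "gr_exact_at_Rt I f t" "a \<in> Fvec I t n" "fmap f t a \<in> ideal_pow I (Suc n)"
  obtains z where "z \<in> FZ I f t n" "a - z \<in> Fvec I t (Suc n)"
  using assms unfolding gr_exact_at_Rt_def by (metis Suc_eq_plus1)

subsection \<open>The Aluffi algebra and the Rees algebra\<close>

definition aluffi_eq_rees :: "'a::comm_ring_1 set \<Rightarrow> 'a set \<Rightarrow> bool" where
  "aluffi_eq_rees I J \<longleftrightarrow> (\<forall>n\<ge>1. J \<inter> ideal_pow I n = ideal_mult J (ideal_pow I (n - 1)))"

lemma aluffi_eq_rees_Int_subset:
  assumes "aluffi_eq_rees I (ideal_gen (f ` {..<t}))"
  shows "ideal_gen (f ` {..<t}) \<inter> ideal_pow I n \<subseteq> fmap f t ` Fvec I t n"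
proof (cases n)
  case 0
  then show ?thesis using ideal_gen_eq_fmap_Fvec_0[of f t I] by blast
next
  case (Suc m)
  then show ?thesis
    using assms by (simp add: aluffi_eq_rees_def ideal_mult_gen_pow_eq_fmap_Fvec)
qed

lemma aluffi_eq_rees_imp_exact_at_Rt:
  assumes JI: "f ` {..<t} \<subseteq> I" and A: "aluffi_eq_rees I (ideal_gen (f ` {..<t}))"
  shows "gr_exact_at_Rt I f t"
proof (rule gr_exact_at_RtI[OF JI])
  fix n a assume a: "a \<in> Fvec I t n" and fa: "fmap f t a \<in> ideal_pow I (Suc n)"
  have "fmap f t a \<in> ideal_gen (f ` {..<t}) \<inter> ideal_pow I (Suc n)"
    using fa by (rule IntI[OF fmap_mem_ideal_gen])
  then have "fmap f t a \<in> fmap f t ` Fvec I t (Suc n)"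
    by (rule subsetD[OF aluffi_eq_rees_Int_subset[OF A]])
  then obtain c where c: "c \<in> Fvec I t (Suc n)" "fmap f t c = fmap f t a"
    by (auto elim!: imageE)
  have "c \<in> Fvec I t n"
    using c(1) Fvec_Suc_subset[of I t n] by blast
  then have "a - c \<in> Fvec I t n"
    by (rule Fvec_diff[OF a])
  moreover have "fmap f t (a - c) = 0"
    using c(2) by (simp add: fmap_diff)
  ultimately have "a - c \<in> FZ I f t n"
    by (simp add: FZ_def Zmod_def Fvec_def)
  then show "\<exists>z\<in>FZ I f t n. a - z \<in> Fvec I t (Suc n)"
  proof (rule bexI[rotated])
    show "a - (a - c) \<in> Fvec I t (Suc n)"
      using c(1) by (simp add: fun_diff_def)
  qed
qed

text \<open>Repeatedly subtracting syzygies raises the order of the coefficients while keeping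
  their combination fixed.\<close>
lemma exact_at_Rt_lift:
  assumes ex: "gr_exact_at_Rt I f t" and a: "a \<in> Fvec I t n"
    and fa: "fmap f t a \<in> ideal_pow I (n + k)"
  shows "\<exists>c\<in>Fvec I t (n + k). fmap f t c = fmap f t a"
  using fa
proof (induct k)
  case 0
  then show ?case using a by auto
next
  case (Suc k)
  have "fmap f t a \<in> ideal_pow I (n + k)"
    using Suc.prems ideal_pow_Suc_subset[of I "n + k"] by auto
  then obtain c where c: "c \<in> Fvec I t (n + k)" "fmap f t c = fmap f t a"
    using Suc.hyps by blast
  moreover have "fmap f t c \<in> ideal_pow I (Suc (n + k))"
    using c(2) Suc.prems by simp
  ultimately obtain z where z: "z \<in> FZ I f t (n + k)" "c - z \<in> Fvec I t (Suc (n + k))"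
    using gr_exact_at_RtE[OF ex] by blast
  have "fmap f t (c - z) = fmap f t a"
    using z(1) c(2) by (simp add: fmap_diff FZ_def Zmod_def)
  then show ?case using z(2) by auto
qed

lemma exact_at_Rt_imp_aluffi_eq_rees:
  assumes JI: "f ` {..<t} \<subseteq> I" and ex: "gr_exact_at_Rt I f t"
  shows "aluffi_eq_rees I (ideal_gen (f ` {..<t}))"
  unfolding aluffi_eq_rees_def
proof (intro allI impI equalityI subsetI)
  fix n x assume n: "1 \<le> n" and x: "x \<in> ideal_gen (f ` {..<t}) \<inter> ideal_pow I n"
  then obtain a where "a \<in> Rt t" "fmap f t a = x"
    unfolding ideal_gen_eq_fmap_image by blast
  then have "a \<in> Fvec I t 1" "fmap f t a = x"
    by (auto simp: Fvec_def)
  then obtain c where "c \<in> Fvec I t (Suc (n - 1))" "fmap f t c = x"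
    using exact_at_Rt_lift[OF ex, of a 1 "n - 1"] x n by auto
  then have "x \<in> fmap f t ` Fvec I t (Suc (n - 1))"
    by (metis image_eqI)
  then show "x \<in> ideal_mult (ideal_gen (f ` {..<t})) (ideal_pow I (n - 1))"
    by (simp add: ideal_mult_gen_pow_eq_fmap_Fvec)
next
  fix n x assume n: "1 \<le> n" and x: "x \<in> ideal_mult (ideal_gen (f ` {..<t})) (ideal_pow I (n - 1))"
  then obtain c where c: "c \<in> Fvec I t (Suc (n - 1))" "x = fmap f t c"
    by (auto simp: ideal_mult_gen_pow_eq_fmap_Fvec)
  then have "x \<in> ideal_pow I (Suc (n - 1))"
    by (auto simp: Fvec_def intro: fmap_mem_ideal_pow[OF JI])
  then show "x \<in> ideal_gen (f ` {..<t}) \<inter> ideal_pow I n"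
    using c(2) n fmap_mem_ideal_gen[of f t c] by simp
qed

lemma aluffi_eq_rees_imp_exact_at_R:
  assumes A: "aluffi_eq_rees I (ideal_gen (f ` {..<t}))"
  shows "gr_exact_at_R I f t"
  unfolding gr_exact_at_R_def
proof (intro allI ballI iffI)
  fix n x assume x: "x \<in> ideal_pow I n"
    and "x \<in> set_plus_ideal (ideal_pow I (n + 1)) (ideal_gen (f ` {..<t}))"
  then obtain y j where yj: "x = y + j" "y \<in> ideal_pow I (Suc n)" "j \<in> ideal_gen (f ` {..<t})"
    unfolding set_plus_ideal_def by auto
  have "j = x - y" using yj(1) by simp
  then have "j \<in> ideal_pow I n"
    using x yj(2) ideal_pow_Suc_subset[of I n] by (blast intro: is_ideal_diff[OF is_ideal_ideal_pow])
  then obtain c where "c \<in> Fvec I t n" "j = fmap f t c"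
    using aluffi_eq_rees_Int_subset[OF A, of n] yj(3) by blast
  then show "\<exists>a\<in>Fvec I t n. x - fmap f t a \<in> ideal_pow I (n + 1)"
    using yj by (intro bexI[of _ c]) auto
next
  fix n x assume "\<exists>a\<in>Fvec I t n. x - fmap f t a \<in> ideal_pow I (n + 1)"
  then obtain a where "x - fmap f t a \<in> ideal_pow I (n + 1)" by blast
  moreover have "fmap f t a \<in> ideal_gen (f ` {..<t})"
    by (rule fmap_mem_ideal_gen)
  ultimately show "x \<in> set_plus_ideal (ideal_pow I (n + 1)) (ideal_gen (f ` {..<t}))"
    unfolding set_plus_ideal_def by (intro CollectI exI[of _ "x - fmap f t a"] exI[of _ "fmap f t a"]) simp
qed

subsection \<open>Generators of the syzygies of the initial forms\<close>

lemma psi_deg_unique: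
  assumes "psi_deg I t a m" and "psi_deg I t a m'"
  shows "m = m'"
proof -
  have "enat (m - 1) = enat (m' - 1)" "1 \<le> m" "1 \<le> m'"
    using assms unfolding psi_deg_def by auto
  then show ?thesis by simp
qed

lemma psi_deg_imp_Fvec:
  assumes a: "a \<in> Rt t" and m: "psi_deg I t a m"
  shows "a \<in> Fvec I t m"
proof -
  have "enat (m - 1) \<le> nu I (a i)" if "i < t" for i
    using m that unfolding psi_deg_def by (auto intro: Min_le)
  then show ?thesis
    using a by (auto simp: Fvec_def enat_le_nu_iff)
qed

lemma psi_deg_of_Fvec_diff:
  assumes z: "z \<in> Fvec I t n" and z': "z \<notin> Fvec I t (Suc n)"
  shows "psi_deg I t z n"
proof -
  obtain j where j: "j < t" "z j \<notin> ideal_pow I n"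
    using z z' by (auto simp: Fvec_def)
  then have n: "1 \<le> n"
    by (cases n) auto
  have "nu I (z j) = enat (n - 1)"
    using z j n by (intro nu_eq_enat) (auto simp: Fvec_def)
  then have "enat (n - 1) \<in> (\<lambda>i. nu I (z i)) ` {..<t}"
    using j(1) by (metis image_eqI lessThan_iff)
  moreover have "enat (n - 1) \<le> nu I (z i)" if "i < t" for i
    using z that by (auto simp: Fvec_def enat_le_nu_iff)
  ultimately have "Min ((\<lambda>i. nu I (z i)) ` {..<t}) = enat (n - 1)"
    by (intro Min_eqI) auto
  then show ?thesis
    using n by (simp add: psi_deg_def)
qed

lemma Zmod_lincomb:
  assumes "S \<subseteq> Zmod f t"
  shows "(\<lambda>i. \<Sum>a\<in>S. r a * a i) \<in> Zmod f t"
proof -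
  have "fmap f t (\<lambda>i. \<Sum>a\<in>S. r a * a i) = (\<Sum>a\<in>S. r a * fmap f t a)"
    unfolding fmap_def by (simp add: sum_distrib_right sum_distrib_left mult.assoc sum.swap[of _ S])
  also have "\<dots> = 0"
    using assms by (intro sum.neutral) (auto simp: Zmod_def)
  finally show ?thesis
    using assms by (auto simp: Zmod_def Rt_def intro!: sum.neutral)
qed

text \<open>The syzygies that exactness produces already generate, each one as its own
  initial form.\<close>
lemma exact_at_Rt_imp_psi_generators:
  assumes ex: "gr_exact_at_Rt I f t"
  shows "exists_psi_generators I f t"
proof -
  define G where "G = {z \<in> Zmod f t. z \<noteq> (\<lambda>_. 0) \<and> (\<exists>m. psi_deg I t z m)}"
  define deg where "deg z = (SOME m. psi_deg I t z m)" for z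
  have deg: "psi_deg I t a (deg a)" if "a \<in> G" for a
  proof -
    from that obtain m where "psi_deg I t a m"
      unfolding G_def by blast
    then show ?thesis
      unfolding deg_def by (rule someI)
  qed
  have "syz_generated_by_psi I f t G deg"
    unfolding syz_generated_by_psi_def
  proof (intro allI ballI impI)
    fix n b assume b: "b \<in> Fvec I t n" and "fmap f t b \<in> ideal_pow I (n + 1)"
    then have fb: "fmap f t b \<in> ideal_pow I (Suc n)"
      by simp
    obtain z where z: "z \<in> FZ I f t n" "b - z \<in> Fvec I t (Suc n)"
      by (rule gr_exact_at_RtE[OF ex b fb])
    show "\<exists>S r. finite S \<and> S \<subseteq> G \<and> (\<forall>a\<in>S. deg a \<le> n \<and> r a \<in> ideal_pow I (n - deg a)) \<and>
           (\<lambda>i. b i - (\<Sum>a\<in>S. r a * a i)) \<in> Fvec I t (n + 1)"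
    proof (cases "z \<in> Fvec I t (Suc n)")
      case True
      have "(\<lambda>i. (b - z) i + z i) \<in> Fvec I t (Suc n)"
        using z(2) True by (rule Fvec_add)
      then have "b \<in> Fvec I t (Suc n)"
        by (simp add: fun_diff_def)
      then show ?thesis
        by (intro exI[of _ "{}"]) simp
    next
      case False
      then have zn: "psi_deg I t z n"
        using z(1) by (intro psi_deg_of_Fvec_diff) (auto simp: FZ_def)
      have "(\<lambda>_. 0) \<in> Fvec I t (Suc n)"
        by (simp add: Fvec_def Rt_def is_ideal_zero[OF is_ideal_ideal_pow])
      then have "z \<noteq> (\<lambda>_. 0)"
        using False by auto
      then have zG: "z \<in> G"
        using z(1) zn by (auto simp: G_def FZ_def)
      then have "deg z = n"
        by (rule psi_deg_unique[OF deg zn])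
      then show ?thesis
        using zG z(2) by (intro exI[of _ "{z}"] exI[of _ "\<lambda>_. 1"]) (simp add: fun_diff_def)
    qed
  qed
  moreover have "G \<subseteq> Zmod f t" "\<forall>a\<in>G. a \<noteq> (\<lambda>_. 0)"
    by (auto simp: G_def)
  ultimately show ?thesis
    unfolding exists_psi_generators_def using deg by blast
qed

lemma psi_generators_imp_exact_at_Rt:
  assumes JI: "f ` {..<t} \<subseteq> I" and ps: "exists_psi_generators I f t"
  shows "gr_exact_at_Rt I f t"
proof -
  obtain G deg where GZ: "G \<subseteq> Zmod f t" and deg: "\<forall>a\<in>G. psi_deg I t a (deg a)"
    and syz: "syz_generated_by_psi I f t G deg"
    using ps unfolding exists_psi_generators_def by (elim exE conjE)
  show ?thesis
  proof (rule gr_exact_at_RtI[OF JI])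
    fix n b assume b: "b \<in> Fvec I t n" and "fmap f t b \<in> ideal_pow I (Suc n)"
    then have fb: "fmap f t b \<in> ideal_pow I (n + 1)"
      by simp
    obtain S r where S: "finite S" "S \<subseteq> G" "\<forall>a\<in>S. deg a \<le> n \<and> r a \<in> ideal_pow I (n - deg a)"
      and bz: "(\<lambda>i. b i - (\<Sum>a\<in>S. r a * a i)) \<in> Fvec I t (n + 1)"
      using syz[unfolded syz_generated_by_psi_def, rule_format, OF b fb] by (elim exE conjE)
    define z where "z = (\<lambda>i. \<Sum>a\<in>S. r a * a i)"
    have "r a * a i \<in> ideal_pow I (n - 1)" if a: "a \<in> S" and i: "i < t" for a i
    proof -
      have da: "psi_deg I t a (deg a)" and aZ: "a \<in> Zmod f t"
        using a S(2) GZ deg by auto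
      have "a i \<in> ideal_pow I (deg a - 1)"
        using psi_deg_imp_Fvec[OF _ da] aZ i by (auto simp: Zmod_def Fvec_def)
      then have "r a * a i \<in> ideal_pow I (n - deg a + (deg a - 1))"
        using S(3) a by (intro ideal_pow_mult) auto
      moreover have "n - deg a + (deg a - 1) = n - 1"
        using S(3) a da by (auto simp: psi_deg_def)
      ultimately show ?thesis by simp
    qed
    then have "\<forall>i<t. z i \<in> ideal_pow I (n - 1)"
      unfolding z_def by (auto intro: is_ideal_sum[OF is_ideal_ideal_pow])
    moreover have "z \<in> Zmod f t"
      unfolding z_def using S(2) GZ by (intro Zmod_lincomb) auto
    ultimately have "z \<in> FZ I f t n"
      by (simp add: FZ_def Fvec_def Zmod_def)
    then show "\<exists>z\<in>FZ I f t n. b - z \<in> Fvec I t (Suc n)"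
    proof (rule bexI[rotated])
      show "b - z \<in> Fvec I t (Suc n)"
        using bz by (simp add: z_def fun_diff_def)
    qed
  qed
qed

theorem theorem1p4:
  fixes I :: "'a::comm_ring_1 set" and f :: "nat \<Rightarrow> 'a" and t :: nat
  assumes noeth: "noetherian_ring TYPE('a)"
    and loc: "local_ring TYPE('a)"
    and I_ideal: "is_ideal I"
    and J_sub: "ideal_gen (f ` {..<t}) \<subseteq> I"
    and ord1: "\<forall>i<t. nu I (f i) = 1"
  shows "((\<forall>n\<ge>1. ideal_gen (f ` {..<t}) \<inter> ideal_pow I n
                  = ideal_mult (ideal_gen (f ` {..<t})) (ideal_pow I (n - 1)))
           \<longleftrightarrow> gr_complex_exact I f t)
       \<and> (gr_complex_exact I f t \<longleftrightarrow> exists_psi_generators I f t)"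
proof -
  have JI: "f ` {..<t} \<subseteq> I"
    using J_sub ideal_gen_subset[of "f ` {..<t}"] by blast
  have A: "aluffi_eq_rees I (ideal_gen (f ` {..<t})) \<longleftrightarrow> gr_exact_at_Rt I f t"
    using aluffi_eq_rees_imp_exact_at_Rt[OF JI] exact_at_Rt_imp_aluffi_eq_rees[OF JI] by blast
  have B: "gr_complex_exact I f t \<longleftrightarrow> gr_exact_at_Rt I f t"
    using A aluffi_eq_rees_imp_exact_at_R gr_i_injective gr_pi_surjective
    by (auto simp: gr_complex_exact_def)
  have C: "exists_psi_generators I f t \<longleftrightarrow> gr_exact_at_Rt I f t"
    using exact_at_Rt_imp_psi_generators psi_generators_imp_exact_at_Rt[OF JI] by blast
  show ?thesis
    using A B C by (simp add: aluffi_eq_rees_def)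
qed

end
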